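(* Let $r\ge 1$, $N\ge 1$ and $n\ge 1$ be integers, and for an integer $e\ge 0$ let $$M_r(e)=\sum_{\substack{i_1+\cdots+i_r=e\\ i_1,\dots,i_r\ge 0}}\frac{(N!)^r}{(N+i_1)!\cdots(N+i_r)!}.$$ Then $$B_{N,n}^{(r)}=(-1)^n\,n!\,\det\big(c_{ij}\big)_{1\le i,j\le n},$$ where $c_{ij}=M_r(i-j+1)$ if $j\le i$, $c_{ij}=1$ if $j=i+1$, and $c_{ij}=0$ if $j>i+1$.
   Context: For positive integers $N$ and $r$, the higher order hypergeometric Bernoulli numbers $B^{(r)}_{N,n}$ ($n\ge0$) are defined by $$\left(\frac{x^N/N!}{e^x-\sum_{n=0}^{N-1}x^n/n!}\right)^r=\sum_{n=0}^\infty B_{N,n}^{(r)}\frac{x^n}{n!}.$$ *)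

theory Defs
  imports "HOL-Computational_Algebra.Formal_Power_Series" "HOL-Library.FuncSet"
    "Jordan_Normal_Form.Determinant"
begin

text \<open>The generating function (x^N/N!) / (e^x - sum_{n<N} x^n/n!) as a formal power series
  over the reals (fps division handles the common factor x^N).\<close>
definition hgB_gen :: "nat \<Rightarrow> real fps" where
  "hgB_gen N = (fps_const (1 / fact N) * fps_X ^ N) /
     (fps_exp 1 - Abs_fps (\<lambda>k. if k < N then 1 / fact k else 0))"

definition hgB :: "nat \<Rightarrow> nat \<Rightarrow> nat \<Rightarrow> real" where
  "hgB r N n = fact n * fps_nth (hgB_gen N ^ r) n"

definition M :: "nat \<Rightarrow> nat \<Rightarrow> nat \<Rightarrow> real" where
  "M r N e = (\<Sum>i \<in> {i. i \<in> {..<r} \<rightarrow>\<^sub>E {..e} \<and> sum i {..<r} = e}.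
      (fact N) ^ r / (\<Prod>k<r. fact (N + i k)))"

end

theory Submission
  imports Defs
begin

text \<open>The series \<open>x\<^sup>N/N! / (e\<^sup>x - \<Sum>n<N. x\<^sup>n/n!)\<close> has the explicit reciprocal
  \<open>\<Sum>k. N!/(N+k)! x\<^sup>k\<close>, whose \<open>r\<close>-th power has coefficients \<open>M\<^sub>r(e)\<close>. For any power
  series \<open>f\<close> with \<open>f * g = 1\<close> and \<open>g\<^sub>0 = 1\<close>, the coefficients \<open>f\<^sub>0, \<dots>, f\<^sub>n\<close> solve the
  unitriangular Toeplitz system of \<open>g\<close> with right-hand side the first unit vector, and
  Cramer's rule followed by a Laplace expansion along the replaced column expresses
  \<open>f\<^sub>n\<close> as \<open>(-1)\<^sup>n\<close> times a Hessenberg determinant in the coefficients of \<open>g\<close>.\<close>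

definition weak_compositions :: "nat \<Rightarrow> nat \<Rightarrow> (nat \<Rightarrow> nat) set" where
  "weak_compositions r e = {i. i \<in> {..<r} \<rightarrow>\<^sub>E {..e} \<and> sum i {..<r} = e}"

lemma finite_weak_compositions: "finite (weak_compositions r e)"
  unfolding weak_compositions_def
  by (rule finite_subset[of _ "{..<r} \<rightarrow>\<^sub>E {..e}"]) (auto intro: finite_PiE)

lemma weak_compositions_0: "weak_compositions 0 e = (if e = 0 then {\<lambda>_. undefined} else {})"
  unfolding weak_compositions_def by auto

lemma bij_betw_weak_compositions_Suc:
  "bij_betw (\<lambda>(j, i). i(r := j)) (SIGMA j:{..e}. weak_compositions r (e - j))
     (weak_compositions (Suc r) e)"
proof (rule bij_betwI[where g = "\<lambda>i. (i r, i(r := undefined))"])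
  show "(\<lambda>(j, i). i(r := j)) \<in> (SIGMA j:{..e}. weak_compositions r (e - j)) \<rightarrow> weak_compositions (Suc r) e"
  proof (clarsimp)
    fix j i assume j: "j \<le> e" and i: "i \<in> weak_compositions r (e - j)"
    have "sum (i(r := j)) {..<r} = sum i {..<r}" by (rule sum.cong) auto
    with i j show "i(r := j) \<in> weak_compositions (Suc r) e"
      unfolding weak_compositions_def
      by (auto simp: PiE_iff lessThan_Suc extensional_def) (metis diff_le_self le_trans lessThan_iff)
  qed
  show "(\<lambda>i. (i r, i(r := undefined))) \<in> weak_compositions (Suc r) e \<rightarrow> (SIGMA j:{..e}. weak_compositions r (e - j))"
  proof
    fix i assume i: "i \<in> weak_compositions (Suc r) e"
    have "sum (i(r := undefined)) {..<r} = sum i {..<r}" by (rule sum.cong) auto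
    with i show "(i r, i(r := undefined)) \<in> (SIGMA j:{..e}. weak_compositions r (e - j))"
      unfolding weak_compositions_def by (auto simp: PiE_iff extensional_def) (intro member_le_sum; auto)
  qed
qed (auto simp: weak_compositions_def PiE_iff extensional_def fun_eq_iff)

lemma fps_nth_power_weak_compositions:
  fixes f :: "'a::comm_semiring_1 fps"
  shows "fps_nth (f ^ r) e = (\<Sum>i\<in>weak_compositions r e. \<Prod>k<r. fps_nth f (i k))"
proof (induction r arbitrary: e)
  case 0
  then show ?case by (simp add: weak_compositions_0)
next
  case (Suc r)
  have "fps_nth (f ^ Suc r) e = (\<Sum>j\<le>e. fps_nth f j * fps_nth (f ^ r) (e - j))"
    by (simp add: fps_mult_nth atLeast0AtMost)
  also have "\<dots> = (\<Sum>(j, i)\<in>(SIGMA j:{..e}. weak_compositions r (e - j)). fps_nth f j * (\<Prod>k<r. fps_nth f (i k)))"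
    by (simp add: Suc.IH sum_distrib_left sum.Sigma finite_weak_compositions)
  also have "\<dots> = (\<Sum>(j, i)\<in>(SIGMA j:{..e}. weak_compositions r (e - j)). \<Prod>k<Suc r. fps_nth f ((i(r := j)) k))"
    by (intro sum.cong refl) (auto simp: mult.commute)
  also have "\<dots> = (\<Sum>i\<in>weak_compositions (Suc r) e. \<Prod>k<Suc r. fps_nth f (i k))"
    by (subst sum.reindex_bij_betw[OF bij_betw_weak_compositions_Suc, symmetric]) (simp add: split_def)
  finally show ?case .
qed

definition hgB_recip :: "nat \<Rightarrow> real fps" where
  "hgB_recip N = Abs_fps (\<lambda>k. fact N / fact (N + k))"

lemma hgB_gen_mult_recip: "hgB_gen N * hgB_recip N = 1"
proof -
  define H :: "real fps" where "H = Abs_fps (\<lambda>k. 1 / fact (N + k))"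
  have denom: "fps_exp 1 - Abs_fps (\<lambda>k. if k < N then 1 / fact k else 0) = fps_X ^ N * H"
    by (rule fps_ext) (simp add: fps_X_power_mult_nth H_def)
  have H0: "fps_nth H 0 \<noteq> 0" by (simp add: H_def)
  have "hgB_gen N = (fps_X ^ N * fps_const (1 / fact N)) / (fps_X ^ N * H)"
    unfolding hgB_gen_def denom by (simp add: mult.commute)
  also have "\<dots> = fps_const (1 / fact N) / H"
    by (rule div_mult_mult1) simp
  also have "\<dots> = fps_const (1 / fact N) * inverse H"
    using H0 by (rule fps_divide_unit)
  finally have gen: "hgB_gen N = fps_const (1 / fact N) * inverse H" .
  have recip: "hgB_recip N = fps_const (fact N) * H"
    by (rule fps_ext) (simp add: hgB_recip_def H_def)
  have "hgB_gen N * hgB_recip N = fps_const (1 / fact N) * fps_const (fact N) * (inverse H * H)"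
    unfolding gen recip by (simp add: algebra_simps)
  also have "\<dots> = 1"
    using H0 by (simp add: inverse_mult_eq_1)
  finally show ?thesis .
qed

lemma M_eq_fps_nth_hgB_recip_power: "M r N e = fps_nth (hgB_recip N ^ r) e"
  unfolding fps_nth_power_weak_compositions M_def weak_compositions_def[symmetric]
  by (simp add: hgB_recip_def prod_dividef)

definition lower_toeplitz_mat :: "(nat \<Rightarrow> 'a::zero) \<Rightarrow> nat \<Rightarrow> 'a mat" where
  "lower_toeplitz_mat a n = mat n n (\<lambda>(i, j). if j \<le> i then a (i - j) else 0)"

definition hessenberg_mat :: "(nat \<Rightarrow> 'a::{zero,one}) \<Rightarrow> nat \<Rightarrow> 'a mat" where
  "hessenberg_mat a n = mat n n (\<lambda>(i, j). if j \<le> i then a (i + 1 - j) else if j = i + 1 then 1 else 0)"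

lemma lower_toeplitz_mat_carrier: "lower_toeplitz_mat a n \<in> carrier_mat n n"
  by (simp add: lower_toeplitz_mat_def)

lemma det_lower_toeplitz_mat:
  "det (lower_toeplitz_mat a n) = (a 0 :: 'a::comm_ring_1) ^ n"
  by (subst det_lower_triangular[OF _ lower_toeplitz_mat_carrier])
    (auto simp: lower_toeplitz_mat_def prod_list_diag_prod)

lemma lower_toeplitz_mat_mult_vec:
  "lower_toeplitz_mat a n *\<^sub>v vec n b = vec n (\<lambda>i. \<Sum>k\<le>i. a (i - k) * (b k :: 'a::comm_semiring_1))"
proof (rule eq_vecI)
  fix i assume "i < dim_vec (vec n (\<lambda>i. \<Sum>k\<le>i. a (i - k) * b k))"
  then have i: "i < n" by simp
  have "(lower_toeplitz_mat a n *\<^sub>v vec n b) $ i = (\<Sum>k<n. if k \<le> i then a (i - k) * b k else 0)"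
    using i by (auto simp: lower_toeplitz_mat_def scalar_prod_def atLeast0LessThan intro!: sum.cong)
  also have "\<dots> = (\<Sum>k\<le>i. a (i - k) * b k)"
    using i by (intro sum.mono_neutral_cong_right) auto
  finally show "(lower_toeplitz_mat a n *\<^sub>v vec n b) $ i = vec n (\<lambda>i. \<Sum>k\<le>i. a (i - k) * b k) $ i"
    using i by simp
qed (simp add: lower_toeplitz_mat_def)

lemma det_lower_toeplitz_replace_last_col:
  fixes a :: "nat \<Rightarrow> 'a::comm_ring_1"
  assumes "a 0 = 1"
  shows "det (replace_col (lower_toeplitz_mat a (Suc n)) (unit_vec (Suc n) 0) n)
    = (-1) ^ n * det (hessenberg_mat a n)"
proof -
  let ?A = "replace_col (lower_toeplitz_mat a (Suc n)) (unit_vec (Suc n) 0) n"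
  have A: "?A \<in> carrier_mat (Suc n) (Suc n)"
    by (simp add: replace_col_def lower_toeplitz_mat_def)
  have "det ?A = (\<Sum>i<Suc n. ?A $$ (i, n) * cofactor ?A i n)"
    by (rule laplace_expansion_column[OF A]) simp
  also have "\<dots> = cofactor ?A 0 n"
    by (subst sum.lessThan_Suc_shift) (simp add: replace_col_def lower_toeplitz_mat_def)
  also have "mat_delete ?A 0 n = hessenberg_mat a n"
    by (rule eq_matI)
      (auto simp: mat_delete_def replace_col_def lower_toeplitz_mat_def hessenberg_mat_def assms)
  then have "cofactor ?A 0 n = (-1) ^ n * det (hessenberg_mat a n)"
    by (simp add: cofactor_def)
  finally show ?thesis .
qed

lemma fps_nth_inverse_hessenberg:
  fixes f g :: "'a::comm_ring_1 fps"
  assumes fg: "f * g = 1" and g0: "fps_nth g 0 = 1"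
  shows "fps_nth f n = (-1) ^ n * det (hessenberg_mat (fps_nth g) n)"
proof -
  let ?T = "lower_toeplitz_mat (fps_nth g) (Suc n)"
  have "fps_nth (f * g) i = (\<Sum>k\<le>i. fps_nth g (i - k) * fps_nth f k)" for i
    by (simp add: fps_mult_nth atLeast0AtMost mult.commute)
  then have system: "?T *\<^sub>v vec (Suc n) (fps_nth f) = unit_vec (Suc n) 0"
    by (auto simp: lower_toeplitz_mat_mult_vec fg unit_vec_def)
  have "fps_nth f n = fps_nth f n * det ?T"
    by (simp add: det_lower_toeplitz_mat g0)
  also have "\<dots> = det (replace_col ?T (?T *\<^sub>v vec (Suc n) (fps_nth f)) n)"
    by (subst cramer_lemma_mat[OF lower_toeplitz_mat_carrier]) auto
  also have "\<dots> = (-1) ^ n * det (hessenberg_mat (fps_nth g) n)"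
    unfolding system by (rule det_lower_toeplitz_replace_last_col[of "fps_nth g", OF g0])
  finally show ?thesis .
qed

theorem theorem2:
  fixes r N n :: nat
  assumes "r \<ge> 1" and "N \<ge> 1" and "n \<ge> 1"
  shows "hgB r N n = (-1) ^ n * fact n *
    det (mat n n (\<lambda>(i, j). if j \<le> i then M r N (i + 1 - j)
                            else if j = i + 1 then 1 else 0))"
proof -
  have "hgB_gen N ^ r * hgB_recip N ^ r = 1"
    by (simp add: hgB_gen_mult_recip flip: power_mult_distrib)
  moreover have "fps_nth (hgB_recip N ^ r) 0 = 1"
    by (simp add: fps_nth_power_0 hgB_recip_def)
  ultimately have "fps_nth (hgB_gen N ^ r) n
      = (-1) ^ n * det (hessenberg_mat (fps_nth (hgB_recip N ^ r)) n)"
    by (rule fps_nth_inverse_hessenberg)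
  then show ?thesis
    unfolding hgB_def hessenberg_mat_def M_eq_fps_nth_hgB_recip_power by simp
qed

end
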